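(* Let $G$ be a finite group generated by reflections of a real Euclidean space $V$ with root system $R$, and $\mathcal M_G\subset V\otimes\mathbb C$ the complement of the complexified reflection hyperplanes. Let $\sigma\in G$ be a special involution, with $V_1,V_2,R_1,R_2,G_1,G_2$ as in the context. Then every connected component of the fixed set $F_{\bar\sigma}=\{z\in\mathcal M_G:\sigma(\bar z)=z\}$ is contractible, and the number of connected components is $|G_1|\,|G_2|$.
   Context: For an involution $\sigma\in G$ (including the identity), let $V_1=\{v:\sigma v=-v\}$ and $V_2=\{v:\sigma v=v\}$, $R_i=R\cap V_i$, and $G_i$ the subgroup of $G$ generated by the reflections in the roots of $R_i$ ($i=1,2$). The involution $\sigma$ is called special if for every root $a\in R$ at least one of the orthogonal projections of $a$ onto $V_1$ and onto $V_2$ is proportional to a root from $R_1$ or $R_2$. *)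

theory Defs
  imports "HOL-Analysis.Analysis"
begin

definition refl :: "'a::euclidean_space \<Rightarrow> 'a \<Rightarrow> 'a" where
  "refl a v = v - (2 * (v \<bullet> a) / (a \<bullet> a)) *\<^sub>R a"

text \<open>Group generated by the reflections in the vectors of a set R
  (reflections are involutions, so closing under left composition suffices).\<close>
inductive_set refl_group :: "'a::euclidean_space set \<Rightarrow> ('a \<Rightarrow> 'a) set"
  for R :: "'a set" where
  id_in: "id \<in> refl_group R"
| step: "g \<in> refl_group R \<Longrightarrow> a \<in> R \<Longrightarrow> refl a \<circ> g \<in> refl_group R"

definition root_system :: "'a::euclidean_space set \<Rightarrow> bool" where
  "root_system R \<longleftrightarrow> finite R \<and> 0 \<notin> R \<and> (\<forall>a\<in>R. \<forall>b\<in>R. refl a b \<in> R)"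

definition orth_proj :: "'a::euclidean_space set \<Rightarrow> 'a \<Rightarrow> 'a" where
  "orth_proj S v = (THE p. p \<in> S \<and> (\<forall>w\<in>S. (v - p) \<bullet> w = 0))"

definition minus_eigenspace :: "('a::euclidean_space \<Rightarrow> 'a) \<Rightarrow> 'a set" where
  "minus_eigenspace \<sigma> = {v. \<sigma> v = - v}"

definition plus_eigenspace :: "('a::euclidean_space \<Rightarrow> 'a) \<Rightarrow> 'a set" where
  "plus_eigenspace \<sigma> = {v. \<sigma> v = v}"

definition proportional_to_root :: "'a::real_vector \<Rightarrow> 'a set \<Rightarrow> bool" where
  "proportional_to_root p S \<longleftrightarrow> (\<exists>b\<in>S. \<exists>c::real. p = c *\<^sub>R b)"

text \<open>Special involution (V1 = (-1)-eigenspace, V2 = (+1)-eigenspace, Ri = R \<inter> Vi).\<close>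
definition special_involution :: "'a::euclidean_space set \<Rightarrow> ('a \<Rightarrow> 'a) \<Rightarrow> bool" where
  "special_involution R \<sigma> \<longleftrightarrow>
     \<sigma> \<in> refl_group R \<and> \<sigma> \<circ> \<sigma> = id \<and>
     (\<forall>a\<in>R.
        proportional_to_root (orth_proj (minus_eigenspace \<sigma>) a)
           ((R \<inter> minus_eigenspace \<sigma>) \<union> (R \<inter> plus_eigenspace \<sigma>))
      \<or> proportional_to_root (orth_proj (plus_eigenspace \<sigma>) a)
           ((R \<inter> minus_eigenspace \<sigma>) \<union> (R \<inter> plus_eigenspace \<sigma>)))"

text \<open>Complexification V \<otimes> C modelled as V \<times> V, (x,y) \<leftrightarrow> x + i y.
  The complexified hyperplane of a is {z. a\<bullet>z = 0}, i.e. a\<bullet>x = 0 and a\<bullet>y = 0.\<close>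
definition hyperplane_complement :: "'a::euclidean_space set \<Rightarrow> ('a \<times> 'a) set" where
  "hyperplane_complement R = {(x, y). \<forall>a\<in>R. \<not> (a \<bullet> x = 0 \<and> a \<bullet> y = 0)}"

text \<open>Fixed set of z \<mapsto> \<sigma>(conj z): \<sigma>(x - i y) = x + i y.\<close>
definition conj_fixed_set :: "'a::euclidean_space set \<Rightarrow> ('a \<Rightarrow> 'a) \<Rightarrow> ('a \<times> 'a) set" where
  "conj_fixed_set R \<sigma> = {(x, y) \<in> hyperplane_complement R. \<sigma> x = x \<and> - \<sigma> y = y}"

end

theory Submission
  imports Defs
begin

text \<open>Writing \<open>z = x + i y\<close>, the map \<open>z \<mapsto> \<sigma>(conj z)\<close> fixes \<open>z\<close> iff \<open>x \<in> V\<^sub>2\<close> and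
  \<open>y \<in> V\<^sub>1\<close>, and these eigenspaces are orthogonal because \<open>\<sigma>\<close> is. A root \<open>a = p\<^sub>1 + p\<^sub>2\<close>
  (\<open>p\<^sub>i \<in> V\<^sub>i\<close>) vanishes at \<open>z\<close> iff \<open>p\<^sub>2 \<bullet> x = p\<^sub>1 \<bullet> y = 0\<close>. If \<open>p\<^sub>1\<close> is proportional to a root,
  then either \<open>p\<^sub>1 = 0\<close> and \<open>a \<in> R\<^sub>2\<close>, or \<open>p\<^sub>1\<close> is a nonzero multiple of a root of \<open>R\<^sub>1\<close>; symmetrically
  for \<open>p\<^sub>2\<close>. Hence for a special involution the fixed set is the product of the regular part of
  \<open>V\<^sub>2\<close> for \<open>R\<^sub>2\<close> and the regular part of \<open>V\<^sub>1\<close> for \<open>R\<^sub>1\<close>.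

  The components of the regular part of a finite reflection group are its chambers, which are
  convex, and the group acts simply transitively on them: transitively because reflecting in a
  wall separating a point from the base chamber brings it closer to a base point, and freely by
  the exchange condition for words in the wall reflections (the simple reflections), which
  generate the group. So the components of the fixed set are products of chambers, hence
  contractible, and there are \<open>|G\<^sub>1| |G\<^sub>2|\<close> of them.\<close>

section \<open>Reflections\<close>

lemma refl_linear: "linear (refl a)"
  unfolding refl_def
  by (auto intro!: linearI simp: algebra_simps inner_add_left divide_simps scaleR_add_left[symmetric])

lemma orthogonal_transformation_refl:
  assumes "a \<noteq> 0"
  shows "orthogonal_transformation (refl a)"
  unfolding orthogonal_transformation_def
proof (intro conjI allI refl_linear)
  fix u v :: 'a
  show "refl a u \<bullet> refl a v = u \<bullet> v"
    using assms unfolding refl_def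
    by (simp add: inner_diff_left inner_diff_right algebra_simps divide_simps)
      (simp add: inner_commute power2_eq_square)
qed

lemma refl_refl: "a \<noteq> 0 \<Longrightarrow> refl a (refl a v) = v"
  unfolding refl_def
  by (simp add: inner_diff_left algebra_simps divide_simps scaleR_left_diff_distrib[symmetric])

lemma refl_self: "a \<noteq> 0 \<Longrightarrow> refl a a = - a"
  unfolding refl_def by (simp add: algebra_simps scaleR_2)

lemma refl_scaleR: "c \<noteq> 0 \<Longrightarrow> refl (c *\<^sub>R a) = refl a"
  unfolding refl_def by (auto simp: fun_eq_iff power2_eq_square field_simps)

lemma refl_eq_if_in_span:
  assumes "b \<in> span {a}" "b \<noteq> 0"
  shows "refl b = refl a"
proof -
  obtain c where "b = c *\<^sub>R a" using assms(1) by (auto simp: span_singleton)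
  with assms(2) show ?thesis by (simp add: refl_scaleR)
qed

lemma span_singleton_uminus: "span {- a} = span {a}"
  by (simp add: span_eq span_base span_neg) (metis span_neg span_base singletonI minus_minus)

lemma refl_orthogonal_transformation_conj:
  assumes "orthogonal_transformation h"
  shows "refl (h a) (h v) = h (refl a v)"
  using assms unfolding refl_def orthogonal_transformation_def
  by (simp add: linear_diff linear_scale)

lemma refl_in_subspace: "subspace U \<Longrightarrow> a \<in> U \<Longrightarrow> v \<in> U \<Longrightarrow> refl a v \<in> U"
  unfolding refl_def by (simp add: subspace_diff subspace_scale)

lemma norm_refl_diff:
  assumes "a \<noteq> 0"
  shows "(norm (refl a u - x))\<^sup>2 = (norm (u - x))\<^sup>2 + 4 * (u \<bullet> a) * (x \<bullet> a) / (a \<bullet> a)"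
proof -
  define k where "k = 2 * (u \<bullet> a) / (a \<bullet> a)"
  have aa: "a \<bullet> a \<noteq> 0" using assms by simp
  have "refl a u - x = (u - x) - k *\<^sub>R a" unfolding refl_def k_def by simp
  then have "(norm (refl a u - x))\<^sup>2 = (norm ((u - x) - k *\<^sub>R a))\<^sup>2" by (simp only:)
  also have "\<dots> = (norm (u - x))\<^sup>2 - 2 * k * ((u - x) \<bullet> a) + k * k * (a \<bullet> a)"
    by (simp add: power2_norm_eq_inner inner_diff_left inner_diff_right inner_commute algebra_simps)
  also have "k * k * (a \<bullet> a) = 2 * k * (u \<bullet> a)" unfolding k_def using aa by (simp add: field_simps)
  finally show ?thesis unfolding k_def using aa by (simp add: inner_diff_left field_simps)
qed

fun refl_word :: "'a::euclidean_space list \<Rightarrow> 'a \<Rightarrow> 'a" where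
  "refl_word [] = id"
| "refl_word (a # w) = refl a \<circ> refl_word w"

lemma refl_word_append: "refl_word (u @ v) = refl_word u \<circ> refl_word v"
  by (induction u) auto

lemma refl_group_eq_refl_word: "refl_group R = refl_word ` lists R"
proof
  show "refl_group R \<subseteq> refl_word ` lists R"
  proof
    fix g assume "g \<in> refl_group R"
    then show "g \<in> refl_word ` lists R"
    proof (induction rule: refl_group.induct)
      case id_in
      show ?case by (auto intro!: image_eqI[where x="[]"])
    next
      case (step g a)
      then obtain w where "w \<in> lists R" "g = refl_word w" by auto
      with step.hyps(2) show ?case by (auto intro!: image_eqI[where x="a # w"])
    qed
  qed
  have "refl_word w \<in> refl_group R" if "w \<in> lists R" for w
    using that
  proof (induction w)
    case Nil
    show ?case using refl_group.id_in[of R] by (simp add: id_def)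
  next
    case (Cons a w)
    then show ?case using refl_group.step[of "refl_word w" R a] by (simp add: o_def)
  qed
  then show "refl_word ` lists R \<subseteq> refl_group R" by auto
qed

lemma refl_group_mono: "R \<subseteq> S \<Longrightarrow> refl_group R \<subseteq> refl_group S"
  unfolding refl_group_eq_refl_word by auto

lemma orthogonal_transformation_refl_word:
  "0 \<notin> R \<Longrightarrow> w \<in> lists R \<Longrightarrow> orthogonal_transformation (refl_word w)"
  by (induction w)
    (auto simp: id_def intro!: orthogonal_transformation_compose orthogonal_transformation_refl)

lemma orthogonal_transformation_refl_group:
  "0 \<notin> R \<Longrightarrow> g \<in> refl_group R \<Longrightarrow> orthogonal_transformation g"
  unfolding refl_group_eq_refl_word using orthogonal_transformation_refl_word by blast

lemma refl_word_rev_cancel: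
  "0 \<notin> R \<Longrightarrow> w \<in> lists R \<Longrightarrow> refl_word (rev w) (refl_word w v) = v"
proof (induction w arbitrary: v)
  case (Cons a w)
  then have "a \<noteq> 0" by auto
  with Cons show ?case by (simp add: refl_word_append refl_refl)
qed simp

lemma refl_word_cancel_rev:
  "0 \<notin> R \<Longrightarrow> w \<in> lists R \<Longrightarrow> refl_word w (refl_word (rev w) v) = v"
  using refl_word_rev_cancel[of R "rev w" v] by (simp add: in_lists_conv_set)

lemma inner_refl_word_right:
  assumes "0 \<notin> R" "w \<in> lists R"
  shows "b \<bullet> refl_word w v = refl_word (rev w) b \<bullet> v"
proof -
  have "orthogonal_transformation (refl_word w)"
    using assms by (rule orthogonal_transformation_refl_word)
  then have "refl_word w (refl_word (rev w) b) \<bullet> refl_word w v = refl_word (rev w) b \<bullet> v"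
    by (simp add: orthogonal_transformation_def)
  then show ?thesis using refl_word_cancel_rev[OF assms] by simp
qed

lemma refl_word_conj_refl:
  assumes "0 \<notin> R" "w \<in> lists R"
  shows "refl_word (rev w) \<circ> refl (refl_word w a) \<circ> refl_word w = refl a"
proof
  fix v
  have "refl (refl_word w a) (refl_word w v) = refl_word w (refl a v)"
    using orthogonal_transformation_refl_word[OF assms] by (rule refl_orthogonal_transformation_conj)
  then show "(refl_word (rev w) \<circ> refl (refl_word w a) \<circ> refl_word w) v = refl a v"
    using refl_word_rev_cancel[OF assms] by simp
qed

lemma refl_word_in_subspace: "w \<in> lists U \<Longrightarrow> subspace U \<Longrightarrow> v \<in> U \<Longrightarrow> refl_word w v \<in> U"
  by (induction w arbitrary: v) (auto simp: refl_in_subspace)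

lemma refl_word_in_roots: "root_system R \<Longrightarrow> w \<in> lists R \<Longrightarrow> b \<in> R \<Longrightarrow> refl_word w b \<in> R"
  by (induction w arbitrary: b) (auto simp: root_system_def)

section \<open>Connected components\<close>

lemma components_eq_open_partition:
  fixes S :: "'a::topological_space set"
  assumes cover: "\<Union>\<C> = S"
    and nonempty: "\<And>C. C \<in> \<C> \<Longrightarrow> C \<noteq> {}"
    and connected: "\<And>C. C \<in> \<C> \<Longrightarrow> connected C"
    and open_in: "\<And>C. C \<in> \<C> \<Longrightarrow> openin (top_of_set S) C"
    and disjoint: "pairwise disjnt \<C>"
  shows "components S = \<C>"
proof -
  have component: "connected_component_set S x = C" if C: "C \<in> \<C>" and x: "x \<in> C" for C x
  proof
    show "C \<subseteq> connected_component_set S x"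
      using C x cover connected by (intro connected_component_maximal) auto
    have "S - C = \<Union>(\<C> - {C})"
      using cover disjoint C by (auto simp: pairwise_def disjnt_def)
    then have "closedin (top_of_set S) C"
      using C cover open_in by (auto simp: closedin_def intro: openin_Union)
    moreover have "connectedin (top_of_set S) (connected_component_set S x)"
      by (simp add: connectedin_subtopology connected_component_subset)
    ultimately have "connected_component_set S x \<subseteq> C \<or> disjnt (connected_component_set S x) C"
      using open_in[OF C] by (intro connectedin_clopen_cases)
    moreover have "x \<in> connected_component_set S x"
      using C x cover by auto
    ultimately show "connected_component_set S x \<subseteq> C"
      using x unfolding disjnt_def by blast
  qed
  show ?thesis
  proof
    show "components S \<subseteq> \<C>"
      using component cover by (auto simp: components_iff)
    show "\<C> \<subseteq> components S"
    proof
      fix C assume "C \<in> \<C>"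
      then obtain x where "x \<in> C" using nonempty by blast
      with component[OF \<open>C \<in> \<C>\<close>] \<open>C \<in> \<C>\<close> cover show "C \<in> components S"
        by (auto simp: components_iff)
    qed
  qed
qed

lemma connected_component_set_Times:
  fixes S :: "'a::topological_space set" and T :: "'b::topological_space set"
  assumes "x \<in> S" "y \<in> T"
  shows "connected_component_set (S \<times> T) (x, y) = connected_component_set S x \<times> connected_component_set T y"
proof (rule connected_component_unique)
  show "(x, y) \<in> connected_component_set S x \<times> connected_component_set T y"
    using assms by simp
  show "connected_component_set S x \<times> connected_component_set T y \<subseteq> S \<times> T"
    by (intro Sigma_mono connected_component_subset)
  show "connected (connected_component_set S x \<times> connected_component_set T y)"
    by (intro connected_Times connected_connected_component)
  fix K assume K: "(x, y) \<in> K" "K \<subseteq> S \<times> T" "connected K"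
  have "fst ` K \<subseteq> connected_component_set S x"
    using K by (intro connected_component_maximal connected_continuous_image continuous_on_fst continuous_on_id)
      (auto intro: rev_image_eqI)
  moreover have "snd ` K \<subseteq> connected_component_set T y"
    using K by (intro connected_component_maximal connected_continuous_image continuous_on_snd continuous_on_id)
      (auto intro: rev_image_eqI)
  ultimately show "K \<subseteq> connected_component_set S x \<times> connected_component_set T y"
    by (auto intro: rev_image_eqI)
qed

lemma components_Times:
  fixes S :: "'a::topological_space set" and T :: "'b::topological_space set"
  shows "components (S \<times> T) = (\<lambda>(C, D). C \<times> D) ` (components S \<times> components T)"
proof
  show "components (S \<times> T) \<subseteq> (\<lambda>(C, D). C \<times> D) ` (components S \<times> components T)"
  proof
    fix K assume "K \<in> components (S \<times> T)"
    then obtain x y where xy: "x \<in> S" "y \<in> T" "K = connected_component_set (S \<times> T) (x, y)"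
      by (auto simp: components_iff)
    then have "(connected_component_set S x, connected_component_set T y) \<in> components S \<times> components T"
      by (simp add: componentsI)
    moreover have "K = connected_component_set S x \<times> connected_component_set T y"
      using xy by (simp add: connected_component_set_Times)
    ultimately show "K \<in> (\<lambda>(C, D). C \<times> D) ` (components S \<times> components T)"
      by (auto intro: rev_image_eqI)
  qed
  show "(\<lambda>(C, D). C \<times> D) ` (components S \<times> components T) \<subseteq> components (S \<times> T)"
  proof clarify
    fix C D assume "C \<in> components S" "D \<in> components T"
    then obtain x y where "x \<in> S" "y \<in> T"
      "C = connected_component_set S x" "D = connected_component_set T y"
      by (auto simp: components_iff)
    then show "C \<times> D \<in> components (S \<times> T)"
      by (metis connected_component_set_Times componentsI mem_Sigma_iff)
  qed
qed

lemma card_components_Times: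
  fixes S :: "'a::topological_space set" and T :: "'b::topological_space set"
  shows "card (components (S \<times> T)) = card (components S) * card (components T)"
proof -
  have "inj_on (\<lambda>(C, D). C \<times> D) (components S \<times> components T)"
  proof (rule inj_onI, clarify)
    fix C D C' D'
    assume "C \<in> components S" "D \<in> components T" "C \<times> D = C' \<times> D'"
    moreover have "C \<noteq> {}" "D \<noteq> {}" using calculation(1,2) in_components_nonempty by auto
    ultimately show "C = C' \<and> D = D'" by (simp add: times_eq_iff)
  qed
  then show ?thesis
    unfolding components_Times by (simp add: card_image card_cartesian_product)
qed

lemma convex_components_Times:
  assumes "\<And>C. C \<in> components S \<Longrightarrow> convex C" "\<And>D. D \<in> components T \<Longrightarrow> convex D"
    and "K \<in> components (S \<times> T)"
  shows "convex K"
  using assms(3) unfolding components_Times by (auto intro: convex_Times assms(1,2))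

section \<open>Chambers of a finite reflection group\<close>

lemma exists_shift_preserving_signs:
  fixes B :: "'a::real_inner set"
  assumes "finite B" and "\<forall>b\<in>B. b \<bullet> z \<noteq> 0"
  obtains e where "e > 0" and "\<forall>b\<in>B. 0 < (b \<bullet> z) * (b \<bullet> (z + e *\<^sub>R d))"
proof -
  have "\<forall>\<^sub>F e in at_right 0. \<forall>b\<in>B. 0 < (b \<bullet> z) * (b \<bullet> (z + e *\<^sub>R d))"
    using assms(1)
  proof (rule eventually_ball_finite, intro ballI)
    fix b assume "b \<in> B"
    have "((\<lambda>e. (b \<bullet> z) * (b \<bullet> z + e * (b \<bullet> d))) \<longlongrightarrow> (b \<bullet> z) * (b \<bullet> z + 0 * (b \<bullet> d))) (at_right 0)"
      by (intro tendsto_intros)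
    moreover have "0 < (b \<bullet> z) * (b \<bullet> z + 0 * (b \<bullet> d))"
      using \<open>b \<in> B\<close> assms(2) by simp (metis not_real_square_gt_zero)
    ultimately show "\<forall>\<^sub>F e in at_right 0. 0 < (b \<bullet> z) * (b \<bullet> (z + e *\<^sub>R d))"
      by (auto dest: order_tendstoD(1) simp: inner_add_right)
  qed
  then obtain c where "c > 0" and c: "\<And>e. 0 < e \<Longrightarrow> e < c \<Longrightarrow> \<forall>b\<in>B. 0 < (b \<bullet> z) * (b \<bullet> (z + e *\<^sub>R d))"
    unfolding eventually_at_right_field by auto
  then show ?thesis using that[of "c / 2"] by simp
qed

lemma exists_subspace_point_off_hyperplanes:
  fixes B :: "'a::real_inner set"
  assumes "subspace H" and "finite B" and "\<And>b. b \<in> B \<Longrightarrow> \<exists>d\<in>H. b \<bullet> d \<noteq> 0"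
  shows "\<exists>d\<in>H. \<forall>b\<in>B. b \<bullet> d \<noteq> 0"
  using assms(2,3)
proof (induction B rule: finite_induct)
  case empty
  then show ?case using subspace_0[OF assms(1)] by auto
next
  case (insert b B)
  then obtain d where d: "d \<in> H" "\<forall>b'\<in>B. b' \<bullet> d \<noteq> 0" by auto
  obtain e where e: "e \<in> H" "b \<bullet> e \<noteq> 0" using insert.prems by auto
  have "finite ((\<lambda>b'. - (b' \<bullet> d) / (b' \<bullet> e)) ` insert b B)" using insert.hyps by simp
  then obtain t where t: "t \<notin> (\<lambda>b'. - (b' \<bullet> d) / (b' \<bullet> e)) ` insert b B"
    using ex_new_if_finite infinite_UNIV_char_0 by blast
  have "b' \<bullet> (d + t *\<^sub>R e) \<noteq> 0" if "b' \<in> insert b B" for b'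
  proof (cases "b' \<bullet> e = 0")
    case True
    then have "b' \<in> B" using that e by auto
    then show ?thesis using True d by (simp add: inner_add_right)
  next
    case False
    have "t \<noteq> - (b' \<bullet> d) / (b' \<bullet> e)" using t that by auto
    then show ?thesis using False by (auto simp: inner_add_right field_simps)
  qed
  moreover have "d + t *\<^sub>R e \<in> H" using d e assms(1) by (simp add: subspace_add subspace_scale)
  ultimately show ?case by blast
qed

definition regular_points :: "'a::real_inner set \<Rightarrow> 'a set \<Rightarrow> 'a set" where
  "regular_points R U = {v \<in> U. \<forall>b\<in>R. b \<bullet> v \<noteq> 0}"

definition chamber :: "'a::real_inner set \<Rightarrow> 'a set \<Rightarrow> 'a \<Rightarrow> 'a set" where
  "chamber R U y = {v \<in> U. \<forall>b\<in>R. 0 < b \<bullet> v \<longleftrightarrow> 0 < b \<bullet> y}"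

locale reflection_arrangement =
  fixes R :: "'a::euclidean_space set" and U :: "'a set"
  assumes root_system: "root_system R"
    and subspace_U: "subspace U"
    and roots_in_U: "R \<subseteq> U"
    and finite_refl_group: "finite (refl_group R)"
begin

lemma finite_roots: "finite R"
  using root_system by (simp add: root_system_def)

lemma zero_notin_roots: "0 \<notin> R"
  using root_system by (simp add: root_system_def)

lemma root_nonzero: "b \<in> R \<Longrightarrow> b \<noteq> 0"
  using zero_notin_roots by auto

lemma refl_root: "a \<in> R \<Longrightarrow> b \<in> R \<Longrightarrow> refl a b \<in> R"
  using root_system by (simp add: root_system_def)

lemma uminus_root: "b \<in> R \<Longrightarrow> - b \<in> R"
  using refl_root[of b b] refl_self[OF root_nonzero] by simp

lemma refl_word_root: "w \<in> lists R \<Longrightarrow> b \<in> R \<Longrightarrow> refl_word w b \<in> R"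
  using root_system by (rule refl_word_in_roots)

lemma regular_point_neg:
  assumes "y \<in> regular_points R U" "b \<in> R" "\<not> 0 < b \<bullet> y"
  shows "b \<bullet> y < 0"
proof -
  have "b \<bullet> y \<noteq> 0" using assms(1,2) by (simp add: regular_points_def)
  with assms(3) show ?thesis by linarith
qed

lemma chamber_subset_regular_points:
  assumes "y \<in> regular_points R U"
  shows "chamber R U y \<subseteq> regular_points R U"
proof
  fix v assume v: "v \<in> chamber R U y"
  have "b \<bullet> v \<noteq> 0" if "b \<in> R" for b
  proof (cases "0 < b \<bullet> y")
    case True
    then show ?thesis using v that by (auto simp: chamber_def)
  next
    case False
    then have "0 < (- b) \<bullet> y" using regular_point_neg[OF assms that] by simp
    then have "0 < (- b) \<bullet> v" using v uminus_root[OF that] unfolding chamber_def by blast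
    then show ?thesis by simp
  qed
  then show "v \<in> regular_points R U" using v by (auto simp: chamber_def regular_points_def)
qed

lemma mem_chamber_self: "y \<in> regular_points R U \<Longrightarrow> y \<in> chamber R U y"
  by (simp add: chamber_def regular_points_def)

lemma chamber_eq: "v \<in> chamber R U y \<Longrightarrow> chamber R U v = chamber R U y"
  by (auto simp: chamber_def)

lemma convex_chamber: "convex (chamber R U y)"
proof -
  have "chamber R U y = U \<inter> (\<Inter>b\<in>R. {v. 0 < b \<bullet> v \<longleftrightarrow> 0 < b \<bullet> y})"
    by (auto simp: chamber_def)
  moreover have "convex {v. 0 < b \<bullet> v \<longleftrightarrow> 0 < b \<bullet> y}" for b
    by (cases "0 < b \<bullet> y") (simp_all add: not_less convex_halfspace_gt convex_halfspace_le)
  ultimately show ?thesis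
    by (simp add: convex_Int convex_INT subspace_imp_convex[OF subspace_U])
qed

lemma mem_chamberI:
  assumes "x \<in> regular_points R U" "y \<in> U" "\<forall>b\<in>R. 0 < b \<bullet> x \<longrightarrow> 0 < b \<bullet> y"
  shows "y \<in> chamber R U x"
proof -
  have "0 < b \<bullet> x" if "b \<in> R" "0 < b \<bullet> y" for b
  proof (rule ccontr)
    assume "\<not> 0 < b \<bullet> x"
    then have "0 < (- b) \<bullet> x" using regular_point_neg[OF assms(1) that(1)] by simp
    then have "0 < (- b) \<bullet> y" using assms(3) uminus_root[OF that(1)] by blast
    then show False using that(2) by simp
  qed
  then show ?thesis using assms(2,3) by (auto simp: chamber_def)
qed

lemma openin_chamber:
  assumes "y \<in> regular_points R U"
  shows "openin (top_of_set (regular_points R U)) (chamber R U y)"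
proof -
  have "chamber R U y = regular_points R U \<inter> (\<Inter>b\<in>{b\<in>R. 0 < b \<bullet> y}. {v. 0 < b \<bullet> v})"
  proof
    show "chamber R U y \<subseteq> regular_points R U \<inter> (\<Inter>b\<in>{b\<in>R. 0 < b \<bullet> y}. {v. 0 < b \<bullet> v})"
      using chamber_subset_regular_points[OF assms] by (auto simp: chamber_def)
    show "regular_points R U \<inter> (\<Inter>b\<in>{b\<in>R. 0 < b \<bullet> y}. {v. 0 < b \<bullet> v}) \<subseteq> chamber R U y"
    proof
      fix v assume "v \<in> regular_points R U \<inter> (\<Inter>b\<in>{b\<in>R. 0 < b \<bullet> y}. {v. 0 < b \<bullet> v})"
      then show "v \<in> chamber R U y"
        using mem_chamberI[OF assms] by (auto simp: regular_points_def)
    qed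
  qed
  moreover have "open (\<Inter>b\<in>{b\<in>R. 0 < b \<bullet> y}. {v. 0 < b \<bullet> v})"
    using finite_roots by (intro open_INT) (auto intro: open_halfspace_gt)
  ultimately show ?thesis by (simp add: openin_open_Int)
qed

lemma refl_word_regular_points:
  assumes "w \<in> lists R" "v \<in> regular_points R U"
  shows "refl_word w v \<in> regular_points R U"
proof -
  have "refl_word w v \<in> U"
    using assms roots_in_U subspace_U by (auto intro: refl_word_in_subspace simp: regular_points_def)
  moreover have "b \<bullet> refl_word w v \<noteq> 0" if "b \<in> R" for b
    using assms that refl_word_root[of "rev w" b]
    by (auto simp: inner_refl_word_right[OF zero_notin_roots] regular_points_def in_lists_conv_set)
  ultimately show ?thesis by (simp add: regular_points_def)
qed

lemma refl_word_chamber: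
  assumes "w \<in> lists R" "v \<in> chamber R U y"
  shows "refl_word w v \<in> chamber R U (refl_word w y)"
proof -
  have "refl_word w v \<in> U"
    using assms roots_in_U subspace_U by (auto intro: refl_word_in_subspace simp: chamber_def)
  moreover have "0 < b \<bullet> refl_word w v \<longleftrightarrow> 0 < b \<bullet> refl_word w y" if "b \<in> R" for b
    using assms that refl_word_root[of "rev w" b]
    by (auto simp: inner_refl_word_right[OF zero_notin_roots] chamber_def in_lists_conv_set)
  ultimately show ?thesis by (simp add: chamber_def)
qed

lemma mem_chamber_refl_word_rev:
  assumes "w \<in> lists R" "refl_word w y \<in> chamber R U x"
  shows "y \<in> chamber R U (refl_word (rev w) x)"
  using refl_word_chamber[of "rev w", OF _ assms(2)] refl_word_rev_cancel[OF zero_notin_roots assms(1)]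
    assms(1) by (simp add: in_lists_conv_set)

lemma refl_word_same_signs_off_span:
  assumes "w \<in> lists R" "a \<in> R"
    and "\<forall>b\<in>R. b \<notin> span {a} \<longrightarrow> (0 < b \<bullet> z \<longleftrightarrow> 0 < b \<bullet> y)"
  shows "\<forall>b\<in>R. b \<notin> span {refl_word w a} \<longrightarrow> (0 < b \<bullet> refl_word w z \<longleftrightarrow> 0 < b \<bullet> refl_word w y)"
proof (intro ballI impI)
  fix b assume b: "b \<in> R" "b \<notin> span {refl_word w a}"
  have rev_w: "rev w \<in> lists R"
    using assms(1) by (simp add: in_lists_conv_set)
  have "refl_word (rev w) b \<notin> span {a}"
  proof
    assume "refl_word (rev w) b \<in> span {a}"
    then have "refl_word w (refl_word (rev w) b) \<in> span {refl_word w a}"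
      using span_linear_image[OF orthogonal_transformation_linear[OF
          orthogonal_transformation_refl_word[OF zero_notin_roots assms(1)]], of "{a}"] by auto
    with b(2) show False
      using refl_word_cancel_rev[OF zero_notin_roots assms(1)] by simp
  qed
  then show "0 < b \<bullet> refl_word w z \<longleftrightarrow> 0 < b \<bullet> refl_word w y"
    using assms(3) refl_word_root[OF rev_w b(1)]
    by (simp add: inner_refl_word_right[OF zero_notin_roots assms(1)])
qed

lemma exists_regular_point: "\<exists>x. x \<in> regular_points R U"
proof -
  have "\<exists>d\<in>U. \<forall>b\<in>R. b \<bullet> d \<noteq> 0"
  proof (rule exists_subspace_point_off_hyperplanes[OF subspace_U finite_roots])
    fix b assume "b \<in> R"
    then show "\<exists>d\<in>U. b \<bullet> d \<noteq> 0" using roots_in_U root_nonzero by force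
  qed
  then show ?thesis by (auto simp: regular_points_def)
qed

lemma exists_generic_point_on_root_hyperplane:
  assumes "a \<in> R"
  obtains z where "z \<in> U" "a \<bullet> z = 0" "\<forall>b\<in>R. b \<notin> span {a} \<longrightarrow> b \<bullet> z \<noteq> 0"
proof -
  let ?H = "{u \<in> U. a \<bullet> u = 0}"
  have "subspace ?H"
    using subspace_U by (auto simp: subspace_def inner_add_right)
  moreover have "\<exists>d\<in>?H. b \<bullet> d \<noteq> 0" if "b \<in> R" "b \<notin> span {a}" for b
  proof -
    define d where "d = b - ((b \<bullet> a) / (a \<bullet> a)) *\<^sub>R a"
    have aa: "a \<bullet> a \<noteq> 0" using root_nonzero[OF assms] by simp
    have "d \<in> U" unfolding d_def
      using assms that roots_in_U by (intro subspace_diff[OF subspace_U] subspace_scale[OF subspace_U]) auto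
    moreover have "a \<bullet> d = 0" unfolding d_def using aa by (simp add: inner_diff_right inner_commute)
    moreover have "d \<noteq> 0" using that(2) unfolding d_def by (auto simp: span_singleton)
    moreover have "b \<bullet> d = d \<bullet> d"
      using \<open>a \<bullet> d = 0\<close> unfolding d_def by (simp add: inner_diff_left inner_commute)
    ultimately show ?thesis by auto
  qed
  ultimately have "\<exists>d\<in>?H. \<forall>b\<in>{b\<in>R. b \<notin> span {a}}. b \<bullet> d \<noteq> 0"
    using finite_roots by (intro exists_subspace_point_off_hyperplanes) auto
  then show ?thesis using that by auto
qed

lemma regular_shift_off_hyperplane:
  assumes "a \<in> R" "z \<in> U" "a \<bullet> z = 0" "\<forall>b\<in>R. b \<notin> span {a} \<longrightarrow> b \<bullet> z \<noteq> 0"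
  obtains e where "e > 0" "z + e *\<^sub>R a \<in> regular_points R U"
    "\<forall>b\<in>R. b \<notin> span {a} \<longrightarrow> 0 < (b \<bullet> z) * (b \<bullet> (z + e *\<^sub>R a))"
proof -
  obtain e where e: "e > 0" "\<forall>b\<in>{b\<in>R. b \<notin> span {a}}. 0 < (b \<bullet> z) * (b \<bullet> (z + e *\<^sub>R a))"
    using exists_shift_preserving_signs[of "{b\<in>R. b \<notin> span {a}}" z a] finite_roots assms(4) by auto
  have "z + e *\<^sub>R a \<in> U"
    using assms(1,2) roots_in_U by (intro subspace_add[OF subspace_U] subspace_scale[OF subspace_U]) auto
  moreover have "b \<bullet> (z + e *\<^sub>R a) \<noteq> 0" if "b \<in> R" for b
  proof (cases "b \<in> span {a}")
    case True
    then obtain c where c: "b = c *\<^sub>R a" by (auto simp: span_singleton)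
    then have "c \<noteq> 0" using root_nonzero[OF that] by auto
    moreover have "a \<noteq> 0" using root_nonzero[OF assms(1)] .
    ultimately show ?thesis using c assms(3) e(1) by (simp add: inner_add_right)
  next
    case False
    then show ?thesis using e(2) that by fastforce
  qed
  ultimately show ?thesis using that e by (auto simp: regular_points_def)
qed

lemma exists_generic_point_on_root_hyperplane_near:
  assumes "a \<in> R" "w \<in> U" "a \<bullet> w = 0"
  obtains z where "z \<in> U" "a \<bullet> z = 0" "\<forall>b\<in>R. b \<notin> span {a} \<longrightarrow> b \<bullet> z \<noteq> 0"
    and "\<forall>b\<in>R. 0 < b \<bullet> w \<longrightarrow> 0 < b \<bullet> z"
proof -
  obtain d where d: "d \<in> U" "a \<bullet> d = 0" "\<forall>b\<in>R. b \<notin> span {a} \<longrightarrow> b \<bullet> d \<noteq> 0"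
    using exists_generic_point_on_root_hyperplane[OF assms(1)] by blast
  obtain e where e: "e > 0" "\<forall>b\<in>{b\<in>R. b \<bullet> w \<noteq> 0}. 0 < (b \<bullet> w) * (b \<bullet> (w + e *\<^sub>R d))"
    by (rule exists_shift_preserving_signs[of "{b\<in>R. b \<bullet> w \<noteq> 0}" w d]) (use finite_roots in auto)
  show ?thesis
  proof (rule that[of "w + e *\<^sub>R d"])
    show "w + e *\<^sub>R d \<in> U"
      using assms(2) d(1) by (intro subspace_add[OF subspace_U] subspace_scale[OF subspace_U])
    show "a \<bullet> (w + e *\<^sub>R d) = 0"
      using assms(3) d(2) by (simp add: inner_add_right)
    show "\<forall>b\<in>R. b \<notin> span {a} \<longrightarrow> b \<bullet> (w + e *\<^sub>R d) \<noteq> 0"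
    proof (intro ballI impI)
      fix b assume b: "b \<in> R" "b \<notin> span {a}"
      show "b \<bullet> (w + e *\<^sub>R d) \<noteq> 0"
      proof (cases "b \<bullet> w = 0")
        case True
        then show ?thesis using d(3) b e(1) by (simp add: inner_add_right)
      next
        case False
        then have "0 < (b \<bullet> w) * (b \<bullet> (w + e *\<^sub>R d))" using e(2) b(1) by blast
        then show ?thesis by auto
      qed
    qed
    show "\<forall>b\<in>R. 0 < b \<bullet> w \<longrightarrow> 0 < b \<bullet> (w + e *\<^sub>R d)"
    proof (intro ballI impI)
      fix b assume "b \<in> R" "0 < b \<bullet> w"
      then have "0 < (b \<bullet> w) * (b \<bullet> (w + e *\<^sub>R d))" using e(2) by simp
      then show "0 < b \<bullet> (w + e *\<^sub>R d)" using \<open>0 < b \<bullet> w\<close> by (simp add: zero_less_mult_iff)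
    qed
  qed
qed

end

section \<open>Simple transitivity on chambers\<close>

locale based_reflection_arrangement = reflection_arrangement +
  fixes x :: "'a::euclidean_space"
  assumes regular_base: "x \<in> regular_points R U"
begin

text \<open>The walls are the simple roots for the chamber of \<open>x\<close>: the point \<open>z\<close> lies on the facet of
  that chamber cut out by the hyperplane of \<open>\<alpha>\<close>.\<close>

definition wall :: "'a \<Rightarrow> bool" where
  "wall \<alpha> \<longleftrightarrow> \<alpha> \<in> R \<and> 0 < \<alpha> \<bullet> x \<and>
     (\<exists>z\<in>U. \<alpha> \<bullet> z = 0 \<and> (\<forall>b\<in>R. b \<notin> span {\<alpha>} \<longrightarrow> (0 < b \<bullet> z \<longleftrightarrow> 0 < b \<bullet> x)))"

abbreviation walls :: "'a set" where
  "walls \<equiv> Collect wall"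

lemma wall_root: "wall \<alpha> \<Longrightarrow> \<alpha> \<in> R"
  by (simp add: wall_def)

lemma wall_pos: "wall \<alpha> \<Longrightarrow> 0 < \<alpha> \<bullet> x"
  by (simp add: wall_def)

lemma lists_walls_roots: "w \<in> lists walls \<Longrightarrow> w \<in> lists R"
  using wall_root by auto

lemma in_span_if_wall_refl_neg:
  assumes "wall \<alpha>" "b \<in> R" "0 < b \<bullet> x" "refl \<alpha> b \<bullet> x < 0"
  shows "b \<in> span {\<alpha>}"
proof (rule ccontr)
  assume b: "b \<notin> span {\<alpha>}"
  obtain z where z: "z \<in> U" "\<alpha> \<bullet> z = 0" "\<forall>b\<in>R. b \<notin> span {\<alpha>} \<longrightarrow> (0 < b \<bullet> z \<longleftrightarrow> 0 < b \<bullet> x)"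
    using assms(1) by (auto simp: wall_def)
  have "refl \<alpha> b \<notin> span {\<alpha>}"
  proof
    assume "refl \<alpha> b \<in> span {\<alpha>}"
    moreover have "b = refl \<alpha> b + (2 * (b \<bullet> \<alpha>) / (\<alpha> \<bullet> \<alpha>)) *\<^sub>R \<alpha>"
      by (simp add: refl_def)
    ultimately have "b \<in> span {\<alpha>}"
      by (metis span_add span_base span_scale singletonI)
    with b show False ..
  qed
  moreover have "refl \<alpha> b \<bullet> z = b \<bullet> z"
    using z(2) by (simp add: refl_def inner_diff_left)
  moreover have "refl \<alpha> b \<in> R"
    using refl_root[OF wall_root[OF assms(1)] assms(2)] .
  ultimately have "0 < b \<bullet> z \<longleftrightarrow> 0 < refl \<alpha> b \<bullet> x"
    using z(3) by auto
  moreover have "0 < b \<bullet> z"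
    using z(3) b assms(2,3) by auto
  ultimately show False
    using assms(4) by simp
qed

lemma wall_word_exchange:
  assumes "\<beta> \<in> R" "0 < \<beta> \<bullet> x"
  shows "w \<in> lists walls \<Longrightarrow> refl_word w \<beta> \<bullet> x < 0 \<Longrightarrow>
    \<exists>w'\<in>lists walls. length w' + 1 = length w \<and> refl_word w' = refl_word w \<circ> refl \<beta>"
proof (induction w)
  case Nil
  then show ?case using assms(2) by simp
next
  case (Cons \<alpha> v)
  have \<alpha>: "wall \<alpha>" and v: "v \<in> lists walls"
    using Cons.prems(1) by auto
  show ?case
  proof (cases "refl_word v \<beta> \<bullet> x < 0")
    case True
    then obtain v' where "v' \<in> lists walls" "length v' + 1 = length v" "refl_word v' = refl_word v \<circ> refl \<beta>"
      using Cons.IH[OF v] by blast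
    then show ?thesis
      using \<alpha> by (intro bexI[where x="\<alpha> # v'"]) (auto simp: o_assoc)
  next
    case False
    \<comment> \<open>\<open>refl \<alpha>\<close> turns the positive root \<open>refl_word v \<beta>\<close> negative, hence is the reflection in it\<close>
    have vR: "v \<in> lists R"
      using v by (rule lists_walls_roots)
    have v\<beta>: "refl_word v \<beta> \<in> R"
      using refl_word_root[OF vR assms(1)] .
    have "0 < refl_word v \<beta> \<bullet> x"
      using False regular_point_neg[OF regular_base v\<beta>] by fastforce
    moreover have "refl \<alpha> (refl_word v \<beta>) \<bullet> x < 0"
      using Cons.prems(2) by simp
    ultimately have "refl_word v \<beta> \<in> span {\<alpha>}"
      using in_span_if_wall_refl_neg[OF \<alpha> v\<beta>] by blast
    then have "refl (refl_word v \<beta>) = refl \<alpha>"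
      using refl_eq_if_in_span root_nonzero[OF v\<beta>] by blast
    moreover have "refl (refl_word v \<beta>) (refl_word v u) = refl_word v (refl \<beta> u)" for u
      using orthogonal_transformation_refl_word[OF zero_notin_roots vR]
      by (rule refl_orthogonal_transformation_conj)
    ultimately have "refl_word v = refl_word (\<alpha> # v) \<circ> refl \<beta>"
      using refl_refl[OF root_nonzero[OF wall_root[OF \<alpha>]]] refl_refl[OF root_nonzero[OF assms(1)]]
      by (auto simp: fun_eq_iff)
    then show ?thesis
      using v by (intro bexI[where x=v] conjI) (auto simp: o_def)
  qed
qed

lemma wall_word_eq_id:
  assumes "w \<in> lists walls" "refl_word w x \<in> chamber R U x"
  shows "refl_word w = id"
  using assms
proof (induction "length w" arbitrary: w rule: less_induct)
  case less
  show ?case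
  proof (cases w rule: rev_exhaust)
    case Nil
    then show ?thesis by simp
  next
    case (snoc u \<alpha>)
    have wR: "w \<in> lists R" and rev_wR: "rev w \<in> lists R"
      using lists_walls_roots[OF less.prems(1)] by (auto simp: in_lists_conv_set)
    have u: "u \<in> lists walls" and \<alpha>: "wall \<alpha>"
      using less.prems(1) snoc by auto
    \<comment> \<open>\<open>w\<close> fixes the base chamber, so \<open>refl_word w \<alpha>\<close> is positive; as \<open>w\<close> ends in \<open>\<alpha>\<close>,
      \<open>refl_word u \<alpha>\<close> is negative and the exchange condition gives a shorter word for \<open>w\<close>\<close>
    have "x \<in> chamber R U (refl_word (rev w) x)"
      using mem_chamber_refl_word_rev[OF wR less.prems(2)] .
    moreover have "refl_word (rev w) x \<in> chamber R U (refl_word (rev w) x)"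
      using mem_chamber_self refl_word_regular_points[OF rev_wR regular_base] by blast
    ultimately have "refl_word (rev w) x \<in> chamber R U x"
      using chamber_eq by blast
    then have "0 < \<alpha> \<bullet> refl_word (rev w) x"
      using wall_root[OF \<alpha>] wall_pos[OF \<alpha>] by (auto simp: chamber_def)
    then have "0 < refl_word w \<alpha> \<bullet> x"
      using inner_refl_word_right[OF zero_notin_roots rev_wR] by simp
    moreover have "refl_word w \<alpha> = - refl_word u \<alpha>"
      using snoc refl_self[OF root_nonzero[OF wall_root[OF \<alpha>]]]
        linear_neg[OF orthogonal_transformation_linear[OF
          orthogonal_transformation_refl_word[OF zero_notin_roots lists_walls_roots[OF u]]]]
      by (simp add: refl_word_append)
    ultimately have "refl_word u \<alpha> \<bullet> x < 0"
      by simp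
    then obtain u' where u': "u' \<in> lists walls" "length u' + 1 = length u"
      "refl_word u' = refl_word u \<circ> refl \<alpha>"
      using wall_word_exchange[OF wall_root[OF \<alpha>] wall_pos[OF \<alpha>] u] by blast
    have "refl_word u' = refl_word w"
      using u'(3) snoc by (simp add: refl_word_append)
    moreover have "length u' < length w"
      using u'(2) snoc by simp
    ultimately show ?thesis
      using less.hyps[of u'] u'(1) less.prems(2) by simp
  qed
qed

definition determining :: "'a set \<Rightarrow> bool" where
  "determining S \<longleftrightarrow> (\<forall>v\<in>U. (\<forall>\<beta>\<in>S. 0 < \<beta> \<bullet> v) \<longrightarrow> (\<forall>b\<in>R. 0 < b \<bullet> x \<longrightarrow> 0 < b \<bullet> v))"

lemma wall_if_hyperplane_point:
  assumes \<alpha>: "\<alpha> \<in> R" "0 < \<alpha> \<bullet> x"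
    and z: "z \<in> U" "\<alpha> \<bullet> z = 0" "\<forall>b\<in>R. b \<notin> span {\<alpha>} \<longrightarrow> b \<bullet> z \<noteq> 0"
    and S: "S \<subseteq> R" "determining S" "\<forall>\<beta>\<in>S - {\<alpha>}. 0 < \<beta> \<bullet> z"
  shows "wall \<alpha>"
proof -
  obtain e where e: "e > 0" "z + e *\<^sub>R \<alpha> \<in> regular_points R U"
    "\<forall>b\<in>R. b \<notin> span {\<alpha>} \<longrightarrow> 0 < (b \<bullet> z) * (b \<bullet> (z + e *\<^sub>R \<alpha>))"
    using regular_shift_off_hyperplane[OF \<alpha>(1) z] by blast
  have same_sign: "0 < b \<bullet> z \<longleftrightarrow> 0 < b \<bullet> (z + e *\<^sub>R \<alpha>)" if "b \<in> R" "b \<notin> span {\<alpha>}" for b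
    using e(3) that by (auto simp: zero_less_mult_iff)
  have "0 < \<beta> \<bullet> (z + e *\<^sub>R \<alpha>)" if "\<beta> \<in> S" for \<beta>
  proof (cases "\<beta> = \<alpha>")
    case True
    then show ?thesis using e(1) z(2) root_nonzero[OF \<alpha>(1)] by (simp add: inner_add_right)
  next
    case False
    then have "0 < \<beta> \<bullet> z" using S(3) that by auto
    moreover have "\<beta> \<notin> span {\<alpha>}" using calculation z(2) by (auto simp: span_singleton)
    ultimately show ?thesis using same_sign S(1) that by blast
  qed
  then have pos: "0 < b \<bullet> (z + e *\<^sub>R \<alpha>)" if "b \<in> R" "0 < b \<bullet> x" for b
    using S(2) e(2) that by (auto simp: determining_def regular_points_def)
  have "0 < b \<bullet> z \<longleftrightarrow> 0 < b \<bullet> x" if b: "b \<in> R" "b \<notin> span {\<alpha>}" for b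
  proof
    assume "0 < b \<bullet> z"
    show "0 < b \<bullet> x"
    proof (rule ccontr)
      assume "\<not> 0 < b \<bullet> x"
      then have "0 < (- b) \<bullet> x" using regular_point_neg[OF regular_base b(1)] by simp
      moreover have "- b \<notin> span {\<alpha>}" using b(2) span_neg by fastforce
      ultimately have "0 < (- b) \<bullet> z" using pos same_sign uminus_root[OF b(1)] by blast
      then show False using \<open>0 < b \<bullet> z\<close> by simp
    qed
  qed (use pos same_sign b in blast)
  then show ?thesis using \<alpha> z by (auto simp: wall_def)
qed

lemma wall_if_minimal_determining:
  assumes S: "S \<subseteq> {b \<in> R. 0 < b \<bullet> x}" "determining S" "\<not> determining (S - {\<alpha>})" and "\<alpha> \<in> S"
  shows "wall \<alpha>"
proof -
  have \<alpha>: "\<alpha> \<in> R" "0 < \<alpha> \<bullet> x" using S(1) \<open>\<alpha> \<in> S\<close> by auto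
  obtain v where v: "v \<in> U" "\<forall>\<beta>\<in>S - {\<alpha>}. 0 < \<beta> \<bullet> v"
    and not_pos: "\<not> (\<forall>b\<in>R. 0 < b \<bullet> x \<longrightarrow> 0 < b \<bullet> v)"
    using S(3) by (auto simp: determining_def)
  have "\<alpha> \<bullet> v \<le> 0"
  proof (rule ccontr)
    assume "\<not> \<alpha> \<bullet> v \<le> 0"
    then have "\<forall>\<beta>\<in>S. 0 < \<beta> \<bullet> v" using v(2) by auto
    then show False using S(2) v(1) not_pos by (auto simp: determining_def)
  qed
  \<comment> \<open>the point where the segment from \<open>v\<close> to \<open>x\<close> meets the hyperplane of \<open>\<alpha>\<close>\<close>
  define w where "w = (\<alpha> \<bullet> x) *\<^sub>R v - (\<alpha> \<bullet> v) *\<^sub>R x"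
  have wU: "w \<in> U"
    using v(1) regular_base unfolding w_def regular_points_def
    by (auto intro: subspace_diff[OF subspace_U] subspace_scale[OF subspace_U])
  have \<alpha>w: "\<alpha> \<bullet> w = 0"
    unfolding w_def by (simp add: inner_diff_right)
  have w_pos: "0 < \<beta> \<bullet> w" if "\<beta> \<in> S - {\<alpha>}" for \<beta>
  proof -
    have "0 < \<beta> \<bullet> v" "0 < \<beta> \<bullet> x" using that v(2) S(1) by auto
    then have "0 < (\<alpha> \<bullet> x) * (\<beta> \<bullet> v)" "(\<alpha> \<bullet> v) * (\<beta> \<bullet> x) \<le> 0"
      using \<alpha>(2) \<open>\<alpha> \<bullet> v \<le> 0\<close> by (simp_all add: mult_nonpos_nonneg)
    then show ?thesis unfolding w_def by (simp add: inner_diff_right)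
  qed
  obtain z where "z \<in> U" "\<alpha> \<bullet> z = 0" "\<forall>b\<in>R. b \<notin> span {\<alpha>} \<longrightarrow> b \<bullet> z \<noteq> 0"
    and "\<forall>b\<in>R. 0 < b \<bullet> w \<longrightarrow> 0 < b \<bullet> z"
    using exists_generic_point_on_root_hyperplane_near[OF \<alpha>(1) wU \<alpha>w] by blast
  moreover have "S \<subseteq> R"
    using S(1) by auto
  moreover have "\<forall>\<beta>\<in>S - {\<alpha>}. 0 < \<beta> \<bullet> z"
    using calculation(4,5) w_pos by blast
  ultimately show ?thesis
    using wall_if_hyperplane_point[OF \<alpha>] S(2) by blast
qed

lemma mem_chamber_if_walls_pos:
  assumes "y \<in> regular_points R U" "\<forall>\<alpha>. wall \<alpha> \<longrightarrow> 0 < \<alpha> \<bullet> y"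
  shows "y \<in> chamber R U x"
proof -
  let ?P = "{b \<in> R. 0 < b \<bullet> x}"
  let ?SS = "{S. S \<subseteq> ?P \<and> determining S}"
  have "finite ?SS"
    using finite_roots by (auto intro: finite_subset[of _ "Pow ?P"])
  moreover have "?P \<in> ?SS"
    by (auto simp: determining_def)
  ultimately obtain S where S: "S \<in> ?SS" and min: "\<not> (\<exists>S'\<in>?SS. card S' < card S)"
    using ex_is_arg_min_if_finite[of ?SS card] unfolding is_arg_min_def by blast
  have "finite S"
    using S finite_roots by (auto intro: finite_subset)
  have "wall \<alpha>" if "\<alpha> \<in> S" for \<alpha>
  proof (rule wall_if_minimal_determining[OF _ _ _ that])
    show "\<not> determining (S - {\<alpha>})"
      using min S that card_Diff1_less[OF \<open>finite S\<close> that] by blast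
  qed (use S in auto)
  then have "\<forall>b\<in>R. 0 < b \<bullet> x \<longrightarrow> 0 < b \<bullet> y"
    using S assms by (auto simp: determining_def regular_points_def)
  then show ?thesis
    using mem_chamberI regular_base assms(1) by (auto simp: regular_points_def)
qed

lemma exists_wall_word_to_chamber:
  assumes "y \<in> regular_points R U"
  shows "\<exists>w\<in>lists walls. refl_word w y \<in> chamber R U x"
proof -
  let ?G = "refl_word ` lists walls"
  have "?G \<subseteq> refl_group R"
    unfolding refl_group_eq_refl_word using lists_walls_roots by auto
  then have "finite ?G"
    using finite_refl_group finite_subset by auto
  moreover have "?G \<noteq> {}"
    by auto
  ultimately obtain g where "g \<in> ?G" and min: "\<not> (\<exists>g'\<in>?G. (norm (g' y - x))\<^sup>2 < (norm (g y - x))\<^sup>2)"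
    using ex_is_arg_min_if_finite[of ?G "\<lambda>g. (norm (g y - x))\<^sup>2"] unfolding is_arg_min_def by blast
  then obtain w where w: "w \<in> lists walls" "g = refl_word w"
    by auto
  show ?thesis
  proof (rule ccontr)
    assume "\<not> ?thesis"
    moreover have "g y \<in> regular_points R U"
      using refl_word_regular_points[OF lists_walls_roots[OF w(1)] assms] w(2) by simp
    ultimately obtain \<alpha> where \<alpha>: "wall \<alpha>" "\<not> 0 < \<alpha> \<bullet> g y"
      using mem_chamber_if_walls_pos w by blast
    \<comment> \<open>reflecting in a wall separating \<open>g y\<close> from \<open>x\<close> brings it closer to \<open>x\<close>\<close>
    have "g y \<bullet> \<alpha> < 0"
      using regular_point_neg[OF \<open>g y \<in> regular_points R U\<close> wall_root[OF \<alpha>(1)] \<alpha>(2)]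
      by (simp add: inner_commute)
    moreover have "0 < x \<bullet> \<alpha>" "0 < \<alpha> \<bullet> \<alpha>"
      using wall_pos[OF \<alpha>(1)] root_nonzero[OF wall_root[OF \<alpha>(1)]] by (auto simp: inner_commute)
    ultimately have "4 * (g y \<bullet> \<alpha>) * (x \<bullet> \<alpha>) / (\<alpha> \<bullet> \<alpha>) < 0"
      by (simp add: divide_neg_pos mult_neg_pos)
    then have "(norm (refl \<alpha> (g y) - x))\<^sup>2 < (norm (g y - x))\<^sup>2"
      using norm_refl_diff[OF root_nonzero[OF wall_root[OF \<alpha>(1)]]] by simp
    moreover have "refl \<alpha> \<circ> g \<in> ?G"
      using w \<alpha>(1) by (auto intro!: image_eqI[where x="\<alpha> # w"])
    then have "\<not> (norm ((refl \<alpha> \<circ> g) y - x))\<^sup>2 < (norm (g y - x))\<^sup>2"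
      using min by blast
    ultimately show False
      by simp
  qed
qed

lemma wall_or_uminus_wall:
  assumes "a \<in> R" "z \<in> U" "a \<bullet> z = 0"
    and "\<forall>b\<in>R. b \<notin> span {a} \<longrightarrow> (0 < b \<bullet> z \<longleftrightarrow> 0 < b \<bullet> x)"
  shows "wall a \<or> wall (- a)"
proof (cases "0 < a \<bullet> x")
  case True
  then show ?thesis using assms by (auto simp: wall_def)
next
  case False
  then have "0 < (- a) \<bullet> x"
    using regular_point_neg[OF regular_base assms(1)] by simp
  then show ?thesis
    using assms uminus_root by (auto simp: wall_def span_singleton_uminus)
qed

lemma refl_eq_wall_word:
  assumes "a \<in> R"
  shows "\<exists>w\<in>lists walls. refl_word w = refl a"
proof -
  \<comment> \<open>move a generic point of the hyperplane of \<open>a\<close>, together with a nearby regular point, to the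
    chamber of \<open>x\<close>; the hyperplane is carried to a wall\<close>
  obtain z where z: "z \<in> U" "a \<bullet> z = 0" "\<forall>b\<in>R. b \<notin> span {a} \<longrightarrow> b \<bullet> z \<noteq> 0"
    using exists_generic_point_on_root_hyperplane[OF assms] by blast
  obtain e where e: "z + e *\<^sub>R a \<in> regular_points R U"
    "\<forall>b\<in>R. b \<notin> span {a} \<longrightarrow> 0 < (b \<bullet> z) * (b \<bullet> (z + e *\<^sub>R a))"
    using regular_shift_off_hyperplane[OF assms z] by blast
  obtain w where w: "w \<in> lists walls" "refl_word w (z + e *\<^sub>R a) \<in> chamber R U x"
    using exists_wall_word_to_chamber[OF e(1)] by blast
  have wR: "w \<in> lists R"
    using w(1) by (rule lists_walls_roots)
  have "\<forall>b\<in>R. b \<notin> span {a} \<longrightarrow> (0 < b \<bullet> z \<longleftrightarrow> 0 < b \<bullet> (z + e *\<^sub>R a))"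
    using e(2) by (auto simp: zero_less_mult_iff)
  then have "\<forall>b\<in>R. b \<notin> span {refl_word w a} \<longrightarrow>
      (0 < b \<bullet> refl_word w z \<longleftrightarrow> 0 < b \<bullet> refl_word w (z + e *\<^sub>R a))"
    by (rule refl_word_same_signs_off_span[OF wR assms])
  moreover have "\<forall>b\<in>R. 0 < b \<bullet> refl_word w (z + e *\<^sub>R a) \<longleftrightarrow> 0 < b \<bullet> x"
    using w(2) by (simp add: chamber_def)
  ultimately have "\<forall>b\<in>R. b \<notin> span {refl_word w a} \<longrightarrow> (0 < b \<bullet> refl_word w z \<longleftrightarrow> 0 < b \<bullet> x)"
    by blast
  moreover have "refl_word w a \<bullet> refl_word w z = 0"
    using orthogonal_transformation_refl_word[OF zero_notin_roots wR] z(2)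
    by (simp add: orthogonal_transformation_def)
  moreover have "refl_word w z \<in> U"
    using refl_word_in_subspace[OF _ subspace_U z(1)] wR roots_in_U by auto
  ultimately have "wall (refl_word w a) \<or> wall (- refl_word w a)"
    using wall_or_uminus_wall refl_word_root[OF wR assms] by blast
  then obtain \<alpha> where \<alpha>: "wall \<alpha>" "refl \<alpha> = refl (refl_word w a)"
    using refl_scaleR[of "-1" "refl_word w a"] by auto
  then have "refl_word (rev w @ \<alpha> # w) = refl a"
    using refl_word_conj_refl[OF zero_notin_roots wR] by (simp add: refl_word_append o_assoc)
  moreover have "rev w @ \<alpha> # w \<in> lists walls"
    using w(1) \<alpha>(1) by auto
  ultimately show ?thesis
    by blast
qed

lemma refl_word_eq_wall_word: "v \<in> lists R \<Longrightarrow> \<exists>w\<in>lists walls. refl_word w = refl_word v"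
proof (induction v)
  case Nil
  show ?case by (auto intro!: bexI[where x="[]"])
next
  case (Cons a v)
  then have "a \<in> R" "v \<in> lists R" by auto
  obtain w1 where "w1 \<in> lists walls" "refl_word w1 = refl a"
    using refl_eq_wall_word[OF \<open>a \<in> R\<close>] by blast
  moreover obtain w2 where "w2 \<in> lists walls" "refl_word w2 = refl_word v"
    using Cons.IH[OF \<open>v \<in> lists R\<close>] by blast
  ultimately show ?case
    by (intro bexI[where x="w1 @ w2"]) (auto simp: refl_word_append)
qed

lemma inj_on_chamber_refl_group: "inj_on (\<lambda>g. chamber R U (g x)) (refl_group R)"
proof (rule inj_onI)
  fix g1 g2
  assume "g1 \<in> refl_group R" "g2 \<in> refl_group R" and eq: "chamber R U (g1 x) = chamber R U (g2 x)"
  then obtain w1 w2 where w: "w1 \<in> lists R" "g1 = refl_word w1" "w2 \<in> lists R" "g2 = refl_word w2"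
    unfolding refl_group_eq_refl_word by auto
  have rev_w2: "rev w2 \<in> lists R"
    using w(3) by (simp add: in_lists_conv_set)
  have "g1 x \<in> chamber R U (g1 x)"
    using mem_chamber_self refl_word_regular_points[OF w(1) regular_base] w(2) by simp
  then have "g1 x \<in> chamber R U (g2 x)"
    using eq by simp
  then have "refl_word (rev w2) (g1 x) \<in> chamber R U x"
    using refl_word_chamber[OF rev_w2] refl_word_rev_cancel[OF zero_notin_roots w(3)] w(4) by metis
  moreover obtain u where u: "u \<in> lists walls" "refl_word u = refl_word (rev w2 @ w1)"
    using refl_word_eq_wall_word[of "rev w2 @ w1"] w(1) rev_w2 by auto
  ultimately have "refl_word (rev w2) \<circ> g1 = id"
    using wall_word_eq_id[OF u(1)] w(2) by (simp add: refl_word_append)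
  then have "g1 v = g2 v" for v
    using refl_word_cancel_rev[OF zero_notin_roots w(3), of "g1 v"] w(4) by (simp add: fun_eq_iff)
  then show "g1 = g2" ..
qed

lemma chamber_refl_group_image:
  "(\<lambda>g. chamber R U (g x)) ` refl_group R = chamber R U ` regular_points R U"
proof
  show "(\<lambda>g. chamber R U (g x)) ` refl_group R \<subseteq> chamber R U ` regular_points R U"
    unfolding refl_group_eq_refl_word using refl_word_regular_points[OF _ regular_base] by auto
  show "chamber R U ` regular_points R U \<subseteq> (\<lambda>g. chamber R U (g x)) ` refl_group R"
  proof clarify
    fix y assume y: "y \<in> regular_points R U"
    obtain w where w: "w \<in> lists walls" "refl_word w y \<in> chamber R U x"
      using exists_wall_word_to_chamber[OF y] by blast
    have wR: "w \<in> lists R" and rev_wR: "rev w \<in> lists R"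
      using lists_walls_roots[OF w(1)] by (auto simp: in_lists_conv_set)
    have "y \<in> chamber R U (refl_word (rev w) x)"
      using mem_chamber_refl_word_rev[OF wR w(2)] .
    then have "chamber R U y = chamber R U (refl_word (rev w) x)"
      by (rule chamber_eq)
    moreover have "refl_word (rev w) \<in> refl_group R"
      unfolding refl_group_eq_refl_word using rev_wR by auto
    ultimately show "chamber R U y \<in> (\<lambda>g. chamber R U (g x)) ` refl_group R"
      by auto
  qed
qed

end

context reflection_arrangement
begin

lemma components_regular_points:
  "components (regular_points R U) = chamber R U ` regular_points R U"
proof (rule components_eq_open_partition)
  show "\<Union> (chamber R U ` regular_points R U) = regular_points R U"
    using chamber_subset_regular_points mem_chamber_self by blast
  show "pairwise disjnt (chamber R U ` regular_points R U)"
  proof (rule pairwiseI)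
    fix C1 C2 assume "C1 \<in> chamber R U ` regular_points R U" "C2 \<in> chamber R U ` regular_points R U"
      and "C1 \<noteq> C2"
    then obtain y1 y2 where "C1 = chamber R U y1" "C2 = chamber R U y2"
      by auto
    with \<open>C1 \<noteq> C2\<close> show "disjnt C1 C2"
      using chamber_eq unfolding disjnt_def by blast
  qed
qed (auto simp: openin_chamber convex_connected[OF convex_chamber] dest: mem_chamber_self)

lemma convex_components_regular_points: "C \<in> components (regular_points R U) \<Longrightarrow> convex C"
  using convex_chamber by (auto simp: components_regular_points)

lemma card_components_regular_points: "card (components (regular_points R U)) = card (refl_group R)"
proof -
  obtain x where "x \<in> regular_points R U"
    using exists_regular_point by blast
  then interpret based_reflection_arrangement R U x
    by unfold_locales
  show ?thesis
    unfolding components_regular_points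
    using card_image[OF inj_on_chamber_refl_group] chamber_refl_group_image by simp
qed

end

section \<open>Special involutions\<close>

lemma orth_proj_eqI:
  assumes "subspace S" and "p \<in> S" and "\<forall>w\<in>S. (v - p) \<bullet> w = 0"
  shows "orth_proj S v = p"
  unfolding orth_proj_def
proof (rule the_equality)
  show "p \<in> S \<and> (\<forall>w\<in>S. (v - p) \<bullet> w = 0)" using assms(2,3) by auto
  fix p' assume p': "p' \<in> S \<and> (\<forall>w\<in>S. (v - p') \<bullet> w = 0)"
  have "p - p' \<in> S" using assms(1,2) p' by (simp add: subspace_diff)
  have "(p - p') \<bullet> (p - p') = (v - p') \<bullet> (p - p') - (v - p) \<bullet> (p - p')"
    by (simp add: inner_diff_left)
  also have "\<dots> = 0" using assms(3) p' \<open>p - p' \<in> S\<close> by simp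
  finally show "p' = p" by simp
qed

lemma root_system_Int_subspace: "root_system R \<Longrightarrow> subspace V \<Longrightarrow> root_system (R \<inter> V)"
  by (auto simp: root_system_def refl_in_subspace)

lemma reflection_arrangement_Int_subspace:
  assumes "root_system R" "finite (refl_group R)" "subspace V"
  shows "reflection_arrangement (R \<inter> V) V"
proof
  show "root_system (R \<inter> V)"
    using assms(1,3) by (rule root_system_Int_subspace)
  show "finite (refl_group (R \<inter> V))"
    using assms(2) refl_group_mono[of "R \<inter> V" R] finite_subset by auto
qed (use assms(3) in auto)

lemma half_diff_add_half_sum:
  fixes a b :: "'a::real_vector"
  shows "(1/2) *\<^sub>R (a - b) + (1/2) *\<^sub>R (a + b) = a"
  by (simp add: algebra_simps flip: scaleR_add_left)

context
  fixes \<sigma> :: "'a::euclidean_space \<Rightarrow> 'a"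
  assumes orthogonal: "orthogonal_transformation \<sigma>" and involution: "\<sigma> \<circ> \<sigma> = id"
begin

lemma subspace_minus_eigenspace: "subspace (minus_eigenspace \<sigma>)"
  using orthogonal_transformation_linear[OF orthogonal]
  by (auto simp: subspace_def minus_eigenspace_def linear_0 linear_add linear_scale)

lemma subspace_plus_eigenspace: "subspace (plus_eigenspace \<sigma>)"
  using orthogonal_transformation_linear[OF orthogonal]
  by (auto simp: subspace_def plus_eigenspace_def linear_0 linear_add linear_scale)

lemma eigenspaces_orthogonal:
  assumes "u \<in> plus_eigenspace \<sigma>" "v \<in> minus_eigenspace \<sigma>"
  shows "u \<bullet> v = 0"
proof -
  have "u \<bullet> v = \<sigma> u \<bullet> \<sigma> v"
    using orthogonal by (simp add: orthogonal_transformation_def)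
  also have "\<dots> = - (u \<bullet> v)"
    using assms by (simp add: plus_eigenspace_def minus_eigenspace_def)
  finally show ?thesis by simp
qed

lemma minus_eigenspace_half_diff: "(1/2) *\<^sub>R (a - \<sigma> a) \<in> minus_eigenspace \<sigma>"
  using orthogonal_transformation_linear[OF orthogonal] involution
  by (simp add: minus_eigenspace_def linear_scale linear_diff fun_eq_iff algebra_simps)

lemma plus_eigenspace_half_sum: "(1/2) *\<^sub>R (a + \<sigma> a) \<in> plus_eigenspace \<sigma>"
  using orthogonal_transformation_linear[OF orthogonal] involution
  by (simp add: plus_eigenspace_def linear_scale linear_add fun_eq_iff algebra_simps)

lemma orth_proj_minus_eigenspace: "orth_proj (minus_eigenspace \<sigma>) a = (1/2) *\<^sub>R (a - \<sigma> a)"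
proof (rule orth_proj_eqI[OF subspace_minus_eigenspace minus_eigenspace_half_diff], intro ballI)
  fix w assume "w \<in> minus_eigenspace \<sigma>"
  have "a - (1/2) *\<^sub>R (a - \<sigma> a) = (1/2) *\<^sub>R (a + \<sigma> a)"
    using half_diff_add_half_sum[of a "\<sigma> a"] by (simp add: algebra_simps)
  then show "(a - (1/2) *\<^sub>R (a - \<sigma> a)) \<bullet> w = 0"
    using eigenspaces_orthogonal[OF plus_eigenspace_half_sum \<open>w \<in> minus_eigenspace \<sigma>\<close>] by simp
qed

lemma orth_proj_plus_eigenspace: "orth_proj (plus_eigenspace \<sigma>) a = (1/2) *\<^sub>R (a + \<sigma> a)"
proof (rule orth_proj_eqI[OF subspace_plus_eigenspace plus_eigenspace_half_sum], intro ballI)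
  fix w assume "w \<in> plus_eigenspace \<sigma>"
  have "a - (1/2) *\<^sub>R (a + \<sigma> a) = (1/2) *\<^sub>R (a - \<sigma> a)"
    using half_diff_add_half_sum[of a "\<sigma> a"] by (simp add: algebra_simps)
  then show "(a - (1/2) *\<^sub>R (a + \<sigma> a)) \<bullet> w = 0"
    using eigenspaces_orthogonal[OF \<open>w \<in> plus_eigenspace \<sigma>\<close> minus_eigenspace_half_diff]
    by (simp add: inner_commute)
qed

end

lemma root_not_orthogonal_to_regular_pair:
  assumes "a \<in> R" "a = p + q" "p \<in> V" "q \<in> W" and orth: "\<forall>v\<in>V. \<forall>w\<in>W. v \<bullet> w = 0"
    and "proportional_to_root p ((R \<inter> V) \<union> (R \<inter> W))"
    and y: "y \<in> regular_points (R \<inter> V) V" and x: "x \<in> regular_points (R \<inter> W) W"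
  shows "a \<bullet> x \<noteq> 0 \<or> a \<bullet> y \<noteq> 0"
proof (cases "p = 0")
  case True
  then have "a \<in> R \<inter> W" using assms(1-4) by simp
  then show ?thesis using x by (simp add: regular_points_def)
next
  case False
  obtain b c where b: "b \<in> (R \<inter> V) \<union> (R \<inter> W)" "p = c *\<^sub>R b"
    using assms(6) by (auto simp: proportional_to_root_def)
  have "b \<notin> W"
  proof
    assume "b \<in> W"
    have "p \<bullet> p = c * (p \<bullet> b)"
      using b(2) by (metis inner_scaleR_right)
    also have "p \<bullet> b = 0"
      using orth assms(3) \<open>b \<in> W\<close> by blast
    finally show False using False by simp
  qed
  then have "b \<in> R \<inter> V" "c \<noteq> 0" using b False by auto
  moreover have "a \<bullet> y = c * (b \<bullet> y)"
  proof -
    have "y \<in> V"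
      using y by (simp add: regular_points_def)
    then have "q \<bullet> y = 0"
      using orth assms(4) by (metis inner_commute)
    then show ?thesis
      using assms(2) b(2) by (simp add: inner_add_left)
  qed
  ultimately show ?thesis using y by (simp add: regular_points_def)
qed

lemma special_involution_orthogonal_involution:
  assumes "root_system R" "special_involution R \<sigma>"
  shows "orthogonal_transformation \<sigma>" "\<sigma> \<circ> \<sigma> = id"
  using assms orthogonal_transformation_refl_group
  by (auto simp: special_involution_def root_system_def)

lemma special_involution_root_nonvanishing:
  assumes "root_system R" "special_involution R \<sigma>" "a \<in> R"
    and x: "x \<in> regular_points (R \<inter> plus_eigenspace \<sigma>) (plus_eigenspace \<sigma>)"
    and y: "y \<in> regular_points (R \<inter> minus_eigenspace \<sigma>) (minus_eigenspace \<sigma>)"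
  shows "a \<bullet> x \<noteq> 0 \<or> a \<bullet> y \<noteq> 0"
proof -
  let ?V1 = "minus_eigenspace \<sigma>" and ?V2 = "plus_eigenspace \<sigma>"
  let ?p1 = "(1/2) *\<^sub>R (a - \<sigma> a)" and ?p2 = "(1/2) *\<^sub>R (a + \<sigma> a)"
  note \<sigma> = special_involution_orthogonal_involution[OF assms(1,2)]
  have p: "?p1 \<in> ?V1" "?p2 \<in> ?V2" "a = ?p1 + ?p2" "a = ?p2 + ?p1"
    using minus_eigenspace_half_diff[OF \<sigma>] plus_eigenspace_half_sum[OF \<sigma>]
      half_diff_add_half_sum[of a "\<sigma> a"] by (simp_all add: add.commute)
  have "proportional_to_root ?p1 ((R \<inter> ?V1) \<union> (R \<inter> ?V2)) \<or>
      proportional_to_root ?p2 ((R \<inter> ?V2) \<union> (R \<inter> ?V1))"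
    using assms(2,3)
    by (auto simp: special_involution_def orth_proj_minus_eigenspace[OF \<sigma>]
        orth_proj_plus_eigenspace[OF \<sigma>] Un_commute)
  moreover have "\<forall>v\<in>?V2. \<forall>w\<in>?V1. v \<bullet> w = 0"
    using eigenspaces_orthogonal[OF \<sigma>] by blast
  moreover have "\<forall>v\<in>?V1. \<forall>w\<in>?V2. v \<bullet> w = 0"
    using eigenspaces_orthogonal[OF \<sigma>] by (metis inner_commute)
  ultimately show ?thesis
    using root_not_orthogonal_to_regular_pair[OF assms(3) p(3,1,2) _ _ y x]
      root_not_orthogonal_to_regular_pair[OF assms(3) p(4,2,1) _ _ x y]
    by blast
qed

lemma conj_fixed_set_eq_Times:
  assumes "root_system R" "special_involution R \<sigma>"
  shows "conj_fixed_set R \<sigma> =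
    regular_points (R \<inter> plus_eigenspace \<sigma>) (plus_eigenspace \<sigma>) \<times>
    regular_points (R \<inter> minus_eigenspace \<sigma>) (minus_eigenspace \<sigma>)"
    (is "_ = ?X \<times> ?Y")
proof -
  have "(x, y) \<in> conj_fixed_set R \<sigma> \<longleftrightarrow> x \<in> ?X \<and> y \<in> ?Y" for x y
  proof
    assume "(x, y) \<in> conj_fixed_set R \<sigma>"
    then have "x \<in> plus_eigenspace \<sigma>" "y \<in> minus_eigenspace \<sigma>"
      and "\<forall>a\<in>R. a \<bullet> x \<noteq> 0 \<or> a \<bullet> y \<noteq> 0"
      by (auto simp: conj_fixed_set_def hyperplane_complement_def plus_eigenspace_def
          minus_eigenspace_def minus_equation_iff)
    then show "x \<in> ?X \<and> y \<in> ?Y"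
      using eigenspaces_orthogonal[OF special_involution_orthogonal_involution[OF assms]]
      by (fastforce simp: regular_points_def inner_commute)
  next
    assume "x \<in> ?X \<and> y \<in> ?Y"
    then show "(x, y) \<in> conj_fixed_set R \<sigma>"
      using special_involution_root_nonvanishing[OF assms]
      by (auto simp: conj_fixed_set_def hyperplane_complement_def regular_points_def
          plus_eigenspace_def minus_eigenspace_def)
  qed
  then show ?thesis by auto
qed

theorem proposition8:
  fixes R :: "'a::euclidean_space set" and \<sigma> :: "'a \<Rightarrow> 'a"
  assumes "root_system R"
    and "finite (refl_group R)"
    and "special_involution R \<sigma>"
  shows "(\<forall>C \<in> components (conj_fixed_set R \<sigma>). contractible C)
       \<and> card (components (conj_fixed_set R \<sigma>))
           = card (refl_group (R \<inter> minus_eigenspace \<sigma>)) * card (refl_group (R \<inter> plus_eigenspace \<sigma>))"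
proof -
  let ?V1 = "minus_eigenspace \<sigma>" and ?V2 = "plus_eigenspace \<sigma>"
  note \<sigma> = special_involution_orthogonal_involution[OF assms(1,3)]
  interpret V1: reflection_arrangement "R \<inter> ?V1" ?V1
    using assms(1,2) subspace_minus_eigenspace[OF \<sigma>] by (rule reflection_arrangement_Int_subspace)
  interpret V2: reflection_arrangement "R \<inter> ?V2" ?V2
    using assms(1,2) subspace_plus_eigenspace[OF \<sigma>] by (rule reflection_arrangement_Int_subspace)
  have F: "conj_fixed_set R \<sigma> = regular_points (R \<inter> ?V2) ?V2 \<times> regular_points (R \<inter> ?V1) ?V1"
    using assms(1,3) by (rule conj_fixed_set_eq_Times)
  have "\<forall>C \<in> components (conj_fixed_set R \<sigma>). contractible C"
    unfolding F using convex_components_Times convex_imp_contractible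
      V2.convex_components_regular_points V1.convex_components_regular_points by blast
  moreover have "card (components (conj_fixed_set R \<sigma>)) =
      card (refl_group (R \<inter> ?V1)) * card (refl_group (R \<inter> ?V2))"
    unfolding F card_components_Times V1.card_components_regular_points
      V2.card_components_regular_points by simp
  ultimately show ?thesis by blast
qed

end
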